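(* A ring $R$ is feckly clean if and only if both of the following hold: (1) $\operatorname{Max}(R)$ is strongly zero-dimensional; (2) for any two distinct maximal ideals $M$ and $N$ of $R$ there exist $a,b\in R$ such that $a\notin M$, $b\notin N$ and $aRb\subseteq J(R)$.
   Context: Rings are associative with identity, not necessarily commutative; ideals are two-sided; $J(R)$ is the Jacobson radical. An element $u\in R$ is full if $RuR=R$. An element $a\in R$ is feckly clean if there exist $e\in R$ and a full element $u\in R$ with $a=e+u$ and $eR(1-e)\subseteq J(R)$; $R$ is feckly clean if every element is feckly clean. $\operatorname{Max}(R)$ is the set of all maximal ideals of $R$, topologized so that the closed sets are exactly the sets $V(I)=\{P\in\operatorname{Max}(R): I\subseteq P\}$ for ideals $I$. A topological space $X$ is strongly zero-dimensional if for any two disjoint closed sets $A,B\subseteq X$ there exist disjoint clopen sets $C_1,C_2$ with $A\subseteq C_1$ and $B\subseteq C_2$. *)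

theory Defs
  imports Main
begin

definition tideal :: "'a::ring_1 set \<Rightarrow> bool" where
  "tideal I \<longleftrightarrow> 0 \<in> I \<and> (\<forall>x\<in>I. \<forall>y\<in>I. x + y \<in> I) \<and> (\<forall>x\<in>I. - x \<in> I)
     \<and> (\<forall>r x. x \<in> I \<longrightarrow> r * x \<in> I \<and> x * r \<in> I)"

definition left_ideal :: "'a::ring_1 set \<Rightarrow> bool" where
  "left_ideal I \<longleftrightarrow> 0 \<in> I \<and> (\<forall>x\<in>I. \<forall>y\<in>I. x + y \<in> I) \<and> (\<forall>x\<in>I. - x \<in> I)
     \<and> (\<forall>r x. x \<in> I \<longrightarrow> r * x \<in> I)"

definition maximal_ideal :: "'a::ring_1 set \<Rightarrow> bool" where
  "maximal_ideal M \<longleftrightarrow> tideal M \<and> M \<noteq> UNIV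
     \<and> (\<forall>I. tideal I \<and> M \<subseteq> I \<longrightarrow> I = M \<or> I = UNIV)"

definition maximal_left_ideal :: "'a::ring_1 set \<Rightarrow> bool" where
  "maximal_left_ideal M \<longleftrightarrow> left_ideal M \<and> M \<noteq> UNIV
     \<and> (\<forall>I. left_ideal I \<and> M \<subseteq> I \<longrightarrow> I = M \<or> I = UNIV)"

definition jacobson :: "'a::ring_1 set" where
  "jacobson = \<Inter>{M. maximal_left_ideal M}"

text \<open>Two-sided ideal generated by a set; R u R is ideal_span {u}.\<close>
definition ideal_span :: "'a::ring_1 set \<Rightarrow> 'a set" where
  "ideal_span S = \<Inter>{I. tideal I \<and> S \<subseteq> I}"

definition full :: "'a::ring_1 \<Rightarrow> bool" where
  "full u \<longleftrightarrow> ideal_span {u} = UNIV"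

definition feckly_clean_elem :: "'a::ring_1 \<Rightarrow> bool" where
  "feckly_clean_elem a \<longleftrightarrow> (\<exists>e u. a = e + u \<and> full u
      \<and> (\<forall>r. e * r * (1 - e) \<in> (jacobson :: 'a set)))"

definition feckly_clean :: "'a::ring_1 itself \<Rightarrow> bool" where
  "feckly_clean _ \<longleftrightarrow> (\<forall>a::'a. feckly_clean_elem a)"

definition MaxR :: "'a::ring_1 set set" where
  "MaxR = {M. maximal_ideal M}"

definition VMax :: "'a::ring_1 set \<Rightarrow> 'a set set" where
  "VMax I = {P \<in> MaxR. I \<subseteq> P}"

definition closedMax :: "'a::ring_1 set set \<Rightarrow> bool" where
  "closedMax A \<longleftrightarrow> (\<exists>I. tideal I \<and> A = VMax I)"

definition clopenMax :: "'a::ring_1 set set \<Rightarrow> bool" where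
  "clopenMax C \<longleftrightarrow> closedMax C \<and> closedMax (MaxR - C)"

definition Max_strongly_zero_dim :: "'a::ring_1 itself \<Rightarrow> bool" where
  "Max_strongly_zero_dim _ \<longleftrightarrow>
     (\<forall>A B :: 'a set set. closedMax A \<and> closedMax B \<and> A \<inter> B = {} \<longrightarrow>
        (\<exists>C1 C2. clopenMax C1 \<and> clopenMax C2 \<and> C1 \<inter> C2 = {} \<and> A \<subseteq> C1 \<and> B \<subseteq> C2))"

end

theory Submission
  imports Defs
begin

(* Write "a \<perp> b" (rad_orth a b) for aRb \<subseteq> J(R), so e \<in> R is "orthogonal" when e \<perp> 1-e.
   The proof rests on three facts about maximal ideals M:
   (i)   J(R) \<subseteq> M and M is prime, so a \<perp> b forces a \<in> M or b \<in> M; for an orthogonal e,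
         M therefore contains exactly one of e and 1-e, and V(e), V(1-e) are complementary
         clopen subsets of Max(R);
   (ii)  u is full iff u lies in no maximal ideal;
   (iii) ideals not contained in a common maximal ideal are comaximal (Zorn).
   Forward direction: split 1 = i + k along two disjoint closed sets (resp. two maximal
   ideals) and write i = e + u feckly cleanly; V(1-e) and V(e) then separate.
   Backward direction (the heart): a clopen partition Max(R) = V(I) \<union> V(K) lifts, using
   condition (2), to an orthogonal e with 1-e \<in> V(I) and e \<in> V(K); this is built from
   ideals of J-annihilators.  Given a, separating V(a) from V(1-a) by such a partition
   yields a = e + (a - e) with a - e full. *)

subsection \<open>Ideals\<close>

lemma tidealI:
  assumes "0 \<in> I" "\<And>x y. x\<in>I \<Longrightarrow> y\<in>I \<Longrightarrow> x+y\<in>I" "\<And>x. x\<in>I \<Longrightarrow> -x\<in>I"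
    "\<And>r x. x\<in>I \<Longrightarrow> r*x\<in>I" "\<And>r x. x\<in>I \<Longrightarrow> x*r\<in>I"
  shows "tideal I"
  unfolding tideal_def using assms by simp

lemma tideal_0: "tideal I \<Longrightarrow> 0 \<in> I" by (simp add: tideal_def)
lemma tideal_add: "tideal I \<Longrightarrow> x\<in>I \<Longrightarrow> y\<in>I \<Longrightarrow> x+y \<in> I" by (simp add: tideal_def)
lemma tideal_neg: "tideal I \<Longrightarrow> x\<in>I \<Longrightarrow> -x \<in> I" by (simp add: tideal_def)
lemma tideal_lmult: "tideal I \<Longrightarrow> x\<in>I \<Longrightarrow> r*x \<in> I" by (simp add: tideal_def)
lemma tideal_rmult: "tideal I \<Longrightarrow> x\<in>I \<Longrightarrow> x*r \<in> I" by (simp add: tideal_def)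

lemma tideal_diff: "tideal I \<Longrightarrow> x\<in>I \<Longrightarrow> y\<in>I \<Longrightarrow> x-y \<in> I"
  using tideal_add[of I x "-y"] tideal_neg[of I y] by simp

lemma tideal_one: "tideal I \<Longrightarrow> 1 \<in> I \<Longrightarrow> I = UNIV"
  using tideal_lmult[of I 1] by force

lemma left_idealI:
  assumes "0 \<in> I" "\<And>x y. x\<in>I \<Longrightarrow> y\<in>I \<Longrightarrow> x+y\<in>I" "\<And>x. x\<in>I \<Longrightarrow> -x\<in>I"
    "\<And>r x. x\<in>I \<Longrightarrow> r*x\<in>I"
  shows "left_ideal I"
  unfolding left_ideal_def using assms by simp

lemma left_ideal_0: "left_ideal I \<Longrightarrow> 0 \<in> I" by (simp add: left_ideal_def)
lemma left_ideal_add: "left_ideal I \<Longrightarrow> x\<in>I \<Longrightarrow> y\<in>I \<Longrightarrow> x+y \<in> I" by (simp add: left_ideal_def)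
lemma left_ideal_neg: "left_ideal I \<Longrightarrow> x\<in>I \<Longrightarrow> -x \<in> I" by (simp add: left_ideal_def)
lemma left_ideal_lmult: "left_ideal I \<Longrightarrow> x\<in>I \<Longrightarrow> r*x \<in> I" by (simp add: left_ideal_def)

lemma left_ideal_one: "left_ideal I \<Longrightarrow> 1 \<in> I \<Longrightarrow> I = UNIV"
  using left_ideal_lmult[of I 1] by force

lemma tideal_iff_left_ideal: "tideal I \<longleftrightarrow> left_ideal I \<and> (\<forall>r x. x \<in> I \<longrightarrow> x * r \<in> I)"
  unfolding tideal_def left_ideal_def by blast

lemma left_ideal_chain_Union:
  fixes C :: "'a::ring_1 set set"
  assumes "C \<noteq> {}" "\<forall>X\<in>C. left_ideal X" "\<forall>X\<in>C. \<forall>Y\<in>C. X\<subseteq>Y \<or> Y\<subseteq>X"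
  shows "left_ideal (\<Union>C)"
proof (rule left_idealI)
  show "0 \<in> \<Union>C" using assms left_ideal_0 by blast
  fix x y assume "x \<in> \<Union>C" "y \<in> \<Union>C"
  then obtain X Y where XY: "X\<in>C" "Y\<in>C" "x\<in>X" "y\<in>Y" by blast
  with assms(3) have "x\<in>X \<and> y\<in>X \<or> x\<in>Y \<and> y\<in>Y" by blast
  then show "x+y \<in> \<Union>C" using XY assms(2) left_ideal_add by blast
next
  fix x assume "x \<in> \<Union>C" then show "-x \<in> \<Union>C" using assms(2) left_ideal_neg by blast
next
  fix r x assume "x \<in> \<Union>C" then show "r*x \<in> \<Union>C" using assms(2) left_ideal_lmult by blast
qed

lemma tideal_chain_Union:
  fixes C :: "'a::ring_1 set set"
  assumes "C \<noteq> {}" "\<forall>X\<in>C. tideal X" "\<forall>X\<in>C. \<forall>Y\<in>C. X\<subseteq>Y \<or> Y\<subseteq>X"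
  shows "tideal (\<Union>C)"
proof -
  have "\<forall>X\<in>C. left_ideal X" using assms(2) tideal_iff_left_ideal by blast
  then have "left_ideal (\<Union>C)" using left_ideal_chain_Union[OF assms(1) _ assms(3)] by blast
  moreover have "\<forall>r x. x \<in> \<Union>C \<longrightarrow> x * r \<in> \<Union>C" using assms(2) tideal_rmult by blast
  ultimately show ?thesis unfolding tideal_iff_left_ideal by blast
qed

lemma exists_maximal_avoiding_one:
  fixes I :: "'a::ring_1 set"
  assumes "Q I" "1 \<notin> I"
    and chain: "\<And>C. C \<noteq> {} \<Longrightarrow> \<forall>X\<in>C. Q X \<Longrightarrow> \<forall>X\<in>C. \<forall>Y\<in>C. X\<subseteq>Y \<or> Y\<subseteq>X \<Longrightarrow> Q (\<Union>C)"
  shows "\<exists>M. Q M \<and> I \<subseteq> M \<and> 1 \<notin> M \<and> (\<forall>X. Q X \<and> M \<subseteq> X \<and> 1 \<notin> X \<longrightarrow> X = M)"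
proof -
  let ?A = "{J::'a set. Q J \<and> I \<subseteq> J \<and> 1 \<notin> J}"
  have "\<exists>U\<in>?A. \<forall>X\<in>C. X \<subseteq> U" if "C \<in> chains ?A" for C
  proof (cases "C = {}")
    case True thus ?thesis using assms by blast
  next
    case False
    have "C \<subseteq> ?A" "\<forall>X\<in>C. \<forall>Y\<in>C. X \<subseteq> Y \<or> Y \<subseteq> X"
      using that unfolding chains_def chain_subset_def by blast+
    then have "\<Union>C \<in> ?A" using chain[OF False] False by blast
    then show ?thesis by blast
  qed
  then obtain M where "M \<in> ?A" "\<forall>X\<in>?A. M \<subseteq> X \<longrightarrow> X = M"
    using Zorn_Lemma2[of ?A] by blast
  then show ?thesis by blast
qed

lemma maximal_left_ideal_exists:
  fixes I :: "'a::ring_1 set"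
  assumes "left_ideal I" "1 \<notin> I"
  shows "\<exists>L. maximal_left_ideal L \<and> I \<subseteq> L"
proof -
  obtain M where M: "left_ideal M" "I \<subseteq> M" "1 \<notin> M"
    "\<forall>X. left_ideal X \<and> M \<subseteq> X \<and> 1 \<notin> X \<longrightarrow> X = M"
    using exists_maximal_avoiding_one[of left_ideal I, OF assms left_ideal_chain_Union] by blast
  then have "maximal_left_ideal M"
    unfolding maximal_left_ideal_def using left_ideal_one by blast
  then show ?thesis using M by blast
qed

lemma maximal_ideal_exists:
  fixes I :: "'a::ring_1 set"
  assumes "tideal I" "1 \<notin> I"
  shows "\<exists>M. maximal_ideal M \<and> I \<subseteq> M"
proof -
  obtain M where M: "tideal M" "I \<subseteq> M" "1 \<notin> M"
    "\<forall>X. tideal X \<and> M \<subseteq> X \<and> 1 \<notin> X \<longrightarrow> X = M"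
    using exists_maximal_avoiding_one[of tideal I, OF assms tideal_chain_Union] by blast
  then have "maximal_ideal M"
    unfolding maximal_ideal_def using tideal_one by blast
  then show ?thesis using M by blast
qed

lemma maximal_idealD:
  "maximal_ideal M \<Longrightarrow> tideal M" "maximal_ideal M \<Longrightarrow> (1::'a::ring_1) \<notin> M"
  unfolding maximal_ideal_def using tideal_one by blast+

lemma maximal_ideal_subset_eq:
  fixes M P :: "'a::ring_1 set"
  assumes "maximal_ideal M" "maximal_ideal P" "M \<subseteq> P"
  shows "P = M"
  using assms maximal_idealD unfolding maximal_ideal_def by blast

lemma sum_eq_one_iff: "x + y = (1::'a::ring_1) \<longleftrightarrow> y = 1 - x"
  by (auto simp: algebra_simps)

lemma maximal_ideal_not_both:
  "maximal_ideal M \<Longrightarrow> x \<in> M \<Longrightarrow> y \<in> M \<Longrightarrow> x + y = (1::'a::ring_1) \<Longrightarrow> False"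
  using tideal_add[OF maximal_idealD(1), of M x y] maximal_idealD(2)[of M] by simp

lemma maximal_ideal_prime:
  fixes M :: "'a::ring_1 set"
  assumes M: "maximal_ideal M" and ab: "\<forall>r. a*r*b \<in> M"
  shows "a \<in> M \<or> b \<in> M"
proof -
  let ?A = "{x. \<forall>r. x*r*b \<in> M}"
  have tM: "tideal M" using M maximal_idealD by blast
  have "tideal ?A"
  proof (rule tidealI)
    fix x r assume "x \<in> ?A"
    then have "\<forall>s. x*(r*s)*b \<in> M" by blast
    then show "x*r \<in> ?A" by (simp add: mult.assoc)
  qed (use tideal_0[OF tM] tideal_add[OF tM] tideal_neg[OF tM] tideal_lmult[OF tM] in
        \<open>auto simp: distrib_right mult.assoc\<close>)
  moreover have "M \<subseteq> ?A" using tideal_rmult[OF tM] by blast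
  ultimately have "?A = M \<or> ?A = UNIV" using M unfolding maximal_ideal_def by blast
  moreover have "1*1*b \<in> M" if "?A = UNIV" using that by blast
  ultimately show ?thesis using ab by auto
qed

subsection \<open>Sums of ideals and comaximality\<close>

definition ideal_sum :: "'a::ring_1 set \<Rightarrow> 'a set \<Rightarrow> 'a set" where
  "ideal_sum I K = {x + y | x y. x \<in> I \<and> y \<in> K}"

lemma ideal_sum_supsets: "0 \<in> K \<Longrightarrow> I \<subseteq> ideal_sum I K" "0 \<in> I \<Longrightarrow> K \<subseteq> ideal_sum I K"
  unfolding ideal_sum_def by force+

lemma left_ideal_sum:
  assumes I: "left_ideal I" and K: "left_ideal K"
  shows "left_ideal (ideal_sum I K)"
proof (rule left_idealI)
  show "0 \<in> ideal_sum I K"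
    unfolding ideal_sum_def using left_ideal_0[OF I] left_ideal_0[OF K] by force
next
  fix a b assume "a \<in> ideal_sum I K" "b \<in> ideal_sum I K"
  then obtain x1 y1 x2 y2 where "a = x1 + y1" "b = x2 + y2" "x1 \<in> I" "x2 \<in> I" "y1 \<in> K" "y2 \<in> K"
    unfolding ideal_sum_def by blast
  moreover have "(x1 + y1) + (x2 + y2) = (x1 + x2) + (y1 + y2)" by (simp add: algebra_simps)
  ultimately show "a + b \<in> ideal_sum I K"
    unfolding ideal_sum_def using left_ideal_add[OF I] left_ideal_add[OF K] by blast
next
  fix a assume "a \<in> ideal_sum I K"
  then obtain x y where "a = x + y" "x \<in> I" "y \<in> K" unfolding ideal_sum_def by blast
  moreover have "-(x + y) = (-x) + (-y)" by simp
  ultimately show "-a \<in> ideal_sum I K"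
    unfolding ideal_sum_def using left_ideal_neg[OF I] left_ideal_neg[OF K] by blast
next
  fix r a assume "a \<in> ideal_sum I K"
  then obtain x y where "a = x + y" "x \<in> I" "y \<in> K" unfolding ideal_sum_def by blast
  moreover have "r * (x + y) = r*x + r*y" by (simp add: distrib_left)
  ultimately show "r * a \<in> ideal_sum I K"
    unfolding ideal_sum_def using left_ideal_lmult[OF I] left_ideal_lmult[OF K] by blast
qed

lemma tideal_sum:
  assumes I: "tideal I" and K: "tideal K"
  shows "tideal (ideal_sum I K)"
  unfolding tideal_iff_left_ideal
proof (intro conjI allI impI)
  show "left_ideal (ideal_sum I K)"
    using left_ideal_sum I K tideal_iff_left_ideal by blast
  fix r a assume "a \<in> ideal_sum I K"
  then obtain x y where "a = x + y" "x \<in> I" "y \<in> K" unfolding ideal_sum_def by blast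
  moreover have "(x + y) * r = x*r + y*r" by (simp add: distrib_right)
  ultimately show "a * r \<in> ideal_sum I K"
    unfolding ideal_sum_def using tideal_rmult[OF I] tideal_rmult[OF K] by blast
qed

lemma comaximal:
  fixes I K :: "'a::ring_1 set"
  assumes I: "tideal I" and K: "tideal K"
    and no_common: "\<And>M. maximal_ideal M \<Longrightarrow> I \<subseteq> M \<Longrightarrow> K \<subseteq> M \<Longrightarrow> False"
  shows "\<exists>x\<in>I. \<exists>y\<in>K. x + y = 1"
proof (rule ccontr)
  assume "\<not> ?thesis"
  then have "1 \<notin> ideal_sum I K" unfolding ideal_sum_def by force
  then obtain M where M: "maximal_ideal M" "ideal_sum I K \<subseteq> M"
    using maximal_ideal_exists tideal_sum[OF I K] by blast
  moreover have "I \<subseteq> ideal_sum I K" "K \<subseteq> ideal_sum I K"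
    using ideal_sum_supsets(1)[OF tideal_0[OF K]] ideal_sum_supsets(2)[OF tideal_0[OF I]] .
  ultimately show False using no_common by blast
qed

subsection \<open>The Jacobson radical\<close>

lemma jacobson_mem: "x \<in> jacobson \<Longrightarrow> maximal_left_ideal L \<Longrightarrow> x \<in> L"
  unfolding jacobson_def by blast

lemma jacobsonI: "(\<And>L. maximal_left_ideal L \<Longrightarrow> x \<in> L) \<Longrightarrow> x \<in> jacobson"
  unfolding jacobson_def by blast

lemma maximal_left_idealD:
  "maximal_left_ideal L \<Longrightarrow> left_ideal L" "maximal_left_ideal L \<Longrightarrow> (1::'a::ring_1) \<notin> L"
  unfolding maximal_left_ideal_def using left_ideal_one by blast+

lemma left_ideal_jacobson: "left_ideal (jacobson :: 'a::ring_1 set)"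
  by (rule left_idealI; rule jacobsonI)
     (auto dest: maximal_left_idealD jacobson_mem
           intro: left_ideal_0 left_ideal_add left_ideal_neg left_ideal_lmult)

lemma left_ideal_principal: "left_ideal (range (\<lambda>t. t * (c::'a::ring_1)))"
proof (rule left_idealI)
  show "0 \<in> range (\<lambda>t. t * c)" by (metis mult_zero_left rangeI)
next
  fix x assume "x \<in> range (\<lambda>t. t * c)"
  then obtain t where "x = t * c" by blast
  then have "- x = (- t) * c" by simp
  then show "- x \<in> range (\<lambda>t. t * c)" by blast
qed (auto simp: distrib_right[symmetric] mult.assoc[symmetric] intro: range_eqI)

lemma jacobson_left_invertible:
  fixes x :: "'a::ring_1"
  assumes x: "x \<in> jacobson"
  shows "\<exists>v. v * (1 - r*x) = 1"
proof (rule ccontr)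
  assume "\<nexists>v. v * (1 - r*x) = 1"
  then have "1 \<notin> range (\<lambda>t. t * (1 - r*x))" by auto
  then obtain L where L: "maximal_left_ideal L" "range (\<lambda>t. t * (1 - r*x)) \<subseteq> L"
    using maximal_left_ideal_exists left_ideal_principal by blast
  have "1 * (1 - r*x) \<in> L" using L(2) by blast
  then have "1 - r*x \<in> L" by simp
  moreover have "r*x \<in> L"
    using left_ideal_lmult[OF maximal_left_idealD(1)[OF L(1)] jacobson_mem[OF x L(1)]] .
  ultimately have "(1 - r*x) + r*x \<in> L" by (rule left_ideal_add[OF maximal_left_idealD(1)[OF L(1)]])
  then show False using maximal_left_idealD(2)[OF L(1)] by simp
qed

lemma left_invertible_swap:
  fixes a b v :: "'a::ring_1"
  assumes "v * (1 - a*b) = 1"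
  shows "(1 + b*v*a) * (1 - b*a) = 1"
proof -
  have "(1 + b*v*a) * (1 - b*a) = 1 - b*a + b*(v*(1 - a*b))*a"
    by (simp add: algebra_simps)
  then show ?thesis using assms by simp
qed

lemma jacobson_rmult:
  fixes x :: "'a::ring_1"
  assumes x: "x \<in> jacobson"
  shows "x * s \<in> jacobson"
proof (rule jacobsonI, rule ccontr)
  fix L :: "'a set" assume L: "maximal_left_ideal L" and nxs: "x*s \<notin> L"
  let ?L' = "ideal_sum L (range (\<lambda>t. t * (x*s)))"
  have lL: "left_ideal L" using maximal_left_idealD L by blast
  have "left_ideal ?L'" using left_ideal_sum[OF lL left_ideal_principal] .
  moreover have "L \<subseteq> ?L'"
    using ideal_sum_supsets(1) left_ideal_0[OF left_ideal_principal] by blast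
  moreover have "x*s \<in> ?L'"
  proof -
    have "x*s = 0 + 1*(x*s)" by simp
    then show ?thesis unfolding ideal_sum_def using left_ideal_0[OF lL] by blast
  qed
  ultimately have "?L' = UNIV" using L nxs unfolding maximal_left_ideal_def by blast
  then obtain l t where lt: "1 = l + t*(x*s)" "l \<in> L" unfolding ideal_sum_def by blast
  obtain v where "v * (1 - (s*t)*x) = 1" using jacobson_left_invertible[OF x] by blast
  then have "v * (1 - s*(t*x)) = 1" by (simp add: mult.assoc)
  then have "(1 + (t*x)*v*s) * (1 - (t*x)*s) = 1" by (rule left_invertible_swap)
  moreover have "1 - (t*x)*s = l" using lt(1) by (simp add: algebra_simps)
  ultimately have "(1 + (t*x)*v*s) * l = 1" by simp
  then have "1 \<in> L" using left_ideal_lmult[OF lL lt(2)] by metis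
  then show False using maximal_left_idealD(2)[OF L] by blast
qed

lemma tideal_jacobson: "tideal (jacobson :: 'a::ring_1 set)"
  using left_ideal_jacobson jacobson_rmult unfolding tideal_iff_left_ideal by blast

text \<open>J(R) lies in every maximal (two-sided) ideal M: M is the largest two-sided ideal
  inside some maximal left ideal L, and J(R) \<subseteq> L is two-sided.\<close>
lemma jacobson_subset_maximal:
  fixes M :: "'a::ring_1 set"
  assumes M: "maximal_ideal M"
  shows "jacobson \<subseteq> M"
proof
  have tM: "tideal M" using M maximal_idealD by blast
  obtain L where L: "maximal_left_ideal L" "M \<subseteq> L"
    using maximal_left_ideal_exists tM tideal_iff_left_ideal maximal_idealD(2)[OF M] by blast
  have lL: "left_ideal L" using maximal_left_idealD L by blast
  let ?P = "{r. \<forall>s. r*s \<in> L}"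
  have "tideal ?P"
    by (rule tidealI)
       (use left_ideal_0[OF lL] left_ideal_add[OF lL] left_ideal_neg[OF lL] left_ideal_lmult[OF lL]
        in \<open>auto simp: distrib_right mult.assoc\<close>)
  moreover have "M \<subseteq> ?P" using L(2) tideal_rmult[OF tM] by blast
  moreover have "1 \<notin> ?P" using maximal_left_idealD(2)[OF L(1)] by (simp; blast)
  then have "?P \<noteq> UNIV" by blast
  ultimately have PM: "?P = M" using M unfolding maximal_ideal_def by blast
  fix x assume "x \<in> (jacobson :: 'a set)"
  then have "x \<in> ?P" using jacobson_rmult jacobson_mem[OF _ L(1)] by blast
  then show "x \<in> M" using PM by blast
qed

subsection \<open>Orthogonality modulo the Jacobson radical\<close>

definition rad_orth :: "'a::ring_1 \<Rightarrow> 'a \<Rightarrow> bool" where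
  "rad_orth a b \<longleftrightarrow> (\<forall>r. a * r * b \<in> (jacobson :: 'a set))"

lemma rad_orth_zero: "rad_orth 0 b" "rad_orth a 0"
  unfolding rad_orth_def using tideal_0[OF tideal_jacobson] by simp_all

lemma rad_orth_add_left: "rad_orth a b \<Longrightarrow> rad_orth a' b \<Longrightarrow> rad_orth (a + a') b"
  unfolding rad_orth_def by (simp add: distrib_right distrib_left tideal_add[OF tideal_jacobson])

lemma rad_orth_add_right: "rad_orth a b \<Longrightarrow> rad_orth a b' \<Longrightarrow> rad_orth a (b + b')"
  unfolding rad_orth_def by (simp add: distrib_left tideal_add[OF tideal_jacobson])

lemma rad_orth_neg_left: "rad_orth a b \<Longrightarrow> rad_orth (-a) b"
  unfolding rad_orth_def by (simp add: tideal_neg[OF tideal_jacobson])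

lemma rad_orth_neg_right: "rad_orth a b \<Longrightarrow> rad_orth a (-b)"
  unfolding rad_orth_def by (simp add: tideal_neg[OF tideal_jacobson])

lemma rad_orth_mult:
  assumes "rad_orth a b"
  shows "rad_orth (x * a) b" "rad_orth (a * x) b" "rad_orth a (x * b)" "rad_orth a (b * x)"
proof -
  have ab: "a * r * b \<in> jacobson" for r using assms unfolding rad_orth_def by blast
  show "rad_orth (x * a) b"
    unfolding rad_orth_def using tideal_lmult[OF tideal_jacobson ab] by (simp add: mult.assoc)
  show "rad_orth (a * x) b"
    unfolding rad_orth_def using ab[of "x * _"] by (simp add: mult.assoc)
  show "rad_orth a (x * b)"
    unfolding rad_orth_def using ab[of "_ * x"] by (simp add: mult.assoc)
  show "rad_orth a (b * x)"
    unfolding rad_orth_def using tideal_rmult[OF tideal_jacobson ab] by (simp add: mult.assoc)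
qed

text \<open>Since J(R) \<subseteq> M and M is prime, aRb \<subseteq> J(R) forces a \<in> M or b \<in> M.\<close>
lemma rad_orth_maximal:
  assumes "rad_orth a b" "maximal_ideal M"
  shows "a \<in> M \<or> b \<in> M"
  using assms maximal_ideal_prime jacobson_subset_maximal unfolding rad_orth_def by blast

lemma rad_orth_complement_dichotomy:
  assumes "rad_orth e (1 - e)" "maximal_ideal M"
  shows "e \<in> M \<longleftrightarrow> 1 - e \<notin> M"
  using rad_orth_maximal[OF assms] maximal_ideal_not_both[OF assms(2), of e "1 - e"] by auto

subsection \<open>Full elements and closed subsets of Max(R)\<close>

lemma ideal_span_tideal: "tideal (ideal_span S)"
  unfolding ideal_span_def
  by (rule tidealI) (auto simp: tideal_0 tideal_add tideal_neg tideal_lmult tideal_rmult)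

lemma ideal_span_sub: "S \<subseteq> ideal_span S" unfolding ideal_span_def by blast

lemma ideal_span_least: "tideal I \<Longrightarrow> S \<subseteq> I \<Longrightarrow> ideal_span S \<subseteq> I"
  unfolding ideal_span_def by blast

lemma full_iff_not_in_maximal: "full (u::'a::ring_1) \<longleftrightarrow> (\<forall>M. maximal_ideal M \<longrightarrow> u \<notin> M)"
proof
  assume "full u"
  then show "\<forall>M. maximal_ideal M \<longrightarrow> u \<notin> M"
    unfolding full_def using ideal_span_least maximal_idealD by blast
next
  assume none: "\<forall>M. maximal_ideal M \<longrightarrow> u \<notin> M"
  show "full u" unfolding full_def
  proof (rule ccontr)
    assume "ideal_span {u} \<noteq> UNIV"
    then have "1 \<notin> ideal_span {u}" using tideal_one ideal_span_tideal by blast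
    then obtain M where "maximal_ideal M" "ideal_span {u} \<subseteq> M"
      using maximal_ideal_exists ideal_span_tideal by blast
    then show False using none ideal_span_sub by blast
  qed
qed

lemma closedMax_zero_set: "closedMax {M \<in> MaxR. a \<in> M}"
proof -
  have "VMax (ideal_span {a}) = {M \<in> MaxR. a \<in> M}"
    unfolding VMax_def MaxR_def using ideal_span_sub ideal_span_least maximal_idealD(1) by blast
  then show ?thesis unfolding closedMax_def using ideal_span_tideal by metis
qed

text \<open>For e orthogonal to 1-e modulo J(R), the zero sets V(e) and V(1-e) are complementary,
  hence both clopen.\<close>
lemma rad_orth_zero_sets_clopen:
  assumes "rad_orth e (1 - e)"
  shows "clopenMax {M \<in> MaxR. e \<in> M}" "clopenMax {M \<in> MaxR. 1 - e \<in> M}"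
proof -
  have "MaxR - {M \<in> MaxR. e \<in> M} = {M \<in> MaxR. 1 - e \<in> M}"
    "MaxR - {M \<in> MaxR. 1 - e \<in> M} = {M \<in> MaxR. e \<in> M}"
    using rad_orth_complement_dichotomy[OF assms] unfolding MaxR_def by blast+
  then show "clopenMax {M \<in> MaxR. e \<in> M}" "clopenMax {M \<in> MaxR. 1 - e \<in> M}"
    unfolding clopenMax_def by (simp_all only: closedMax_zero_set simp_thms)
qed

subsection \<open>Feckly clean rings satisfy (1) and (2)\<close>

lemma feckly_clean_decomposition_separates:
  assumes dec: "a = e + u" "full u" "rad_orth e (1 - e)" and P: "maximal_ideal P"
  shows "a \<in> P \<Longrightarrow> 1 - e \<in> P" "1 - a \<in> P \<Longrightarrow> e \<in> P"
proof -
  have uP: "u \<notin> P" using dec(2) P full_iff_not_in_maximal by blast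
  have tP: "tideal P" using P maximal_idealD by blast
  show "1 - e \<in> P" if "a \<in> P"
  proof -
    have "e \<notin> P" using tideal_diff[OF tP that, of e] uP dec(1) by auto
    then show ?thesis using rad_orth_complement_dichotomy[OF dec(3) P] by blast
  qed
  show "e \<in> P" if "1 - a \<in> P"
  proof -
    have "(1 - e) - (1 - a) = u" using dec(1) by (simp add: algebra_simps)
    then have "1 - e \<notin> P" using tideal_diff[OF tP _ that] uP by metis
    then show ?thesis using rad_orth_complement_dichotomy[OF dec(3) P] by blast
  qed
qed

lemma feckly_clean_elemE:
  fixes a :: "'a::ring_1"
  assumes "feckly_clean TYPE('a)"
  obtains e u where "a = e + u" "full u" "rad_orth e (1 - e)"
  using assms unfolding feckly_clean_def feckly_clean_elem_def rad_orth_def by blast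

text \<open>Condition (1): for disjoint closed V(I), V(K) write 1 = i + k and split i feckly
  cleanly as e + u; then V(1-e) \<supseteq> V(I) and V(e) \<supseteq> V(K) are disjoint clopen sets.\<close>
lemma feckly_clean_imp_strongly_zero_dim:
  assumes fc: "feckly_clean TYPE('a::ring_1)"
  shows "Max_strongly_zero_dim TYPE('a)"
  unfolding Max_strongly_zero_dim_def
proof (intro allI impI)
  fix A B :: "'a set set" assume AB: "closedMax A \<and> closedMax B \<and> A \<inter> B = {}"
  obtain I K where I: "tideal I" "A = VMax I" and K: "tideal K" "B = VMax K"
    using AB unfolding closedMax_def by blast
  have "\<exists>i\<in>I. \<exists>k\<in>K. i + k = 1"
    by (rule comaximal[OF I(1) K(1)]) (use AB in \<open>auto simp: I(2) K(2) VMax_def MaxR_def\<close>)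
  then obtain i k where ik: "i \<in> I" "k \<in> K" "1 - i = k" by (auto simp: sum_eq_one_iff)
  obtain e u where dec: "i = e + u" "full u" "rad_orth e (1 - e)" using fc feckly_clean_elemE by blast
  have "A \<subseteq> {M \<in> MaxR. 1 - e \<in> M}" "B \<subseteq> {M \<in> MaxR. e \<in> M}"
    using feckly_clean_decomposition_separates[OF dec] ik
    unfolding I(2) K(2) VMax_def MaxR_def by auto
  moreover have "{M \<in> MaxR. 1 - e \<in> M} \<inter> {M \<in> MaxR. e \<in> M} = {}"
    using rad_orth_complement_dichotomy[OF dec(3)] unfolding MaxR_def by blast
  ultimately show "\<exists>C1 C2. clopenMax C1 \<and> clopenMax C2 \<and> C1 \<inter> C2 = {} \<and> A \<subseteq> C1 \<and> B \<subseteq> C2"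
    using rad_orth_zero_sets_clopen[OF dec(3)] by blast
qed

text \<open>Condition (2): the same argument for two distinct maximal ideals M, N, which are
  comaximal, produces e \<notin> M and 1-e \<notin> N with eR(1-e) \<subseteq> J(R).\<close>
lemma feckly_clean_imp_separation:
  fixes M N :: "'a::ring_1 set"
  assumes fc: "feckly_clean TYPE('a)" and M: "maximal_ideal M" and N: "maximal_ideal N"
    and "M \<noteq> N"
  shows "\<exists>a b. a \<notin> M \<and> b \<notin> N \<and> rad_orth a b"
proof -
  have "\<exists>m\<in>M. \<exists>n\<in>N. m + n = 1"
    by (rule comaximal[OF maximal_idealD(1)[OF M] maximal_idealD(1)[OF N]])
       (use maximal_ideal_subset_eq M N \<open>M \<noteq> N\<close> in metis)
  then obtain m where m: "m \<in> M" "1 - m \<in> N" by (auto simp: sum_eq_one_iff)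
  obtain e u where dec: "m = e + u" "full u" "rad_orth e (1 - e)" using fc feckly_clean_elemE by blast
  have "1 - e \<in> M" "e \<in> N" using feckly_clean_decomposition_separates[OF dec] M N m by blast+
  then have "e \<notin> M" "1 - e \<notin> N" using rad_orth_complement_dichotomy[OF dec(3)] M N by blast+
  then show ?thesis using dec(3) by blast
qed

subsection \<open>Lifting clopen partitions of Max(R) under condition (2)\<close>

definition max_separated :: "'a::ring_1 itself \<Rightarrow> bool" where
  "max_separated _ \<longleftrightarrow> (\<forall>M N :: 'a set. maximal_ideal M \<and> maximal_ideal N \<and> M \<noteq> N \<longrightarrow>
     (\<exists>a b. a \<notin> M \<and> b \<notin> N \<and> rad_orth a b))"

text \<open>For a prime N, the elements a admitting some b \<notin> N with aRb \<subseteq> J(R) form an ideal: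
  two witnesses b1, b2 combine to a single one b1 s b2 \<notin> N.\<close>
definition orth_outside :: "'a::ring_1 set \<Rightarrow> 'a set" where
  "orth_outside N = {a. \<exists>b. b \<notin> N \<and> rad_orth a b}"

lemma tideal_orth_outside:
  assumes N: "maximal_ideal N"
  shows "tideal (orth_outside N)"
proof (rule tidealI)
  show "0 \<in> orth_outside N"
    unfolding orth_outside_def using maximal_idealD(2)[OF N] rad_orth_zero by blast
next
  fix x1 x2 assume "x1 \<in> orth_outside N" "x2 \<in> orth_outside N"
  then obtain b1 b2 where b: "b1 \<notin> N" "rad_orth x1 b1" "b2 \<notin> N" "rad_orth x2 b2"
    unfolding orth_outside_def by blast
  obtain s where s: "b1 * s * b2 \<notin> N" using maximal_ideal_prime[OF N] b(1,3) by blast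
  have "rad_orth x1 (b1 * s * b2)" using rad_orth_mult(4)[OF b(2), of "s * b2"] by (simp add: mult.assoc)
  moreover have "rad_orth x2 (b1 * s * b2)" using rad_orth_mult(3)[OF b(4), of "b1 * s"] .
  ultimately show "x1 + x2 \<in> orth_outside N"
    unfolding orth_outside_def using s rad_orth_add_left by blast
qed (auto simp: orth_outside_def rad_orth_neg_left rad_orth_mult)

definition orth_one_minus :: "'a::ring_1 set \<Rightarrow> 'a set" where
  "orth_one_minus I = {b. \<exists>i\<in>I. rad_orth (1 - i) b}"

lemma tideal_orth_one_minus:
  assumes I: "tideal I"
  shows "tideal (orth_one_minus I)"
proof (rule tidealI)
  show "0 \<in> orth_one_minus I"
    unfolding orth_one_minus_def using tideal_0[OF I] rad_orth_zero by blast
next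
  fix b1 b2 assume "b1 \<in> orth_one_minus I" "b2 \<in> orth_one_minus I"
  then obtain i1 i2 where i: "i1 \<in> I" "rad_orth (1 - i1) b1" "i2 \<in> I" "rad_orth (1 - i2) b2"
    unfolding orth_one_minus_def by blast
  text \<open>1 - (i1 + i2 - i1 i2) = (1 - i1)(1 - i2) is a common left factor.\<close>
  have iI: "i1 + i2 - i1 * i2 \<in> I"
    using i(1,3) tideal_add[OF I] tideal_diff[OF I] tideal_rmult[OF I] by blast
  have "1 - (i1 + i2 - i1 * i2) = (1 - i1) * (1 - i2)" by (simp add: algebra_simps)
  moreover have "rad_orth ((1 - i1) * (1 - i2)) (b1 + b2)"
    using rad_orth_add_right[OF rad_orth_mult(2)[OF i(2)] rad_orth_mult(1)[OF i(4)]] .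
  ultimately have "rad_orth (1 - (i1 + i2 - i1 * i2)) (b1 + b2)" by simp
  then show "b1 + b2 \<in> orth_one_minus I" unfolding orth_one_minus_def using iI by blast
next
  fix b assume "b \<in> orth_one_minus I"
  then show "- b \<in> orth_one_minus I"
    unfolding orth_one_minus_def using rad_orth_neg_right by blast
next
  fix r b assume "b \<in> orth_one_minus I"
  then show "r * b \<in> orth_one_minus I"
    unfolding orth_one_minus_def using rad_orth_mult(3) by blast
next
  fix r b assume "b \<in> orth_one_minus I"
  then show "b * r \<in> orth_one_minus I"
    unfolding orth_one_minus_def using rad_orth_mult(4) by blast
qed

definition lann_rad :: "'a::ring_1 set \<Rightarrow> 'a set" where
  "lann_rad S = {x. \<forall>s\<in>S. rad_orth x s}"

definition rann_rad :: "'a::ring_1 set \<Rightarrow> 'a set" where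
  "rann_rad S = {y. \<forall>s\<in>S. rad_orth s y}"

lemma tideal_lann_rad: "tideal (lann_rad S)"
  by (rule tidealI)
     (simp_all add: lann_rad_def rad_orth_zero rad_orth_add_left rad_orth_neg_left rad_orth_mult)

lemma tideal_rann_rad: "tideal (rann_rad S)"
  by (rule tidealI)
     (simp_all add: rann_rad_def rad_orth_zero rad_orth_add_right rad_orth_neg_right rad_orth_mult)

text \<open>Let Max(R) = V(I) \<union> V(K) be a partition.  Every N \<in> V(K) lies outside V(I); condition
  (2) applied to N and each P \<in> V(I) shows orth_outside N + I = R, which yields an element
  of orth_one_minus I outside N.  Hence orth_one_minus I + K = R.\<close>
lemma partition_comaximal_witness:
  fixes I K :: "'a::ring_1 set"
  assumes sep: "max_separated TYPE('a)" and I: "tideal I" and K: "tideal K"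
    and part: "\<And>P. maximal_ideal P \<Longrightarrow> I \<subseteq> P \<longleftrightarrow> \<not> K \<subseteq> P"
  shows "\<exists>i\<in>I. \<exists>k\<in>K. \<exists>w. w + k = 1 \<and> rad_orth (1 - i) w"
proof -
  have outside: "\<exists>b \<in> orth_one_minus I. b \<notin> N" if N: "maximal_ideal N" "K \<subseteq> N" for N
  proof -
    have "\<exists>x\<in>orth_outside N. \<exists>i\<in>I. x + i = 1"
    proof (rule comaximal[OF tideal_orth_outside[OF N(1)] I])
      fix P assume P: "maximal_ideal P" "orth_outside N \<subseteq> P" "I \<subseteq> P"
      then have "P \<noteq> N" using part N by blast
      then obtain a b where "a \<notin> P" "b \<notin> N" "rad_orth a b"
        using sep P(1) N(1) unfolding max_separated_def by blast
      then show False using P(2) unfolding orth_outside_def by blast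
    qed
    then obtain x i where xi: "x \<in> orth_outside N" "i \<in> I" "x + i = 1" by blast
    then have "x = 1 - i" by (simp add: eq_diff_eq)
    then obtain b where "b \<notin> N" "rad_orth (1 - i) b" using xi(1) unfolding orth_outside_def by blast
    then show ?thesis unfolding orth_one_minus_def using xi(2) by blast
  qed
  have "\<exists>w\<in>orth_one_minus I. \<exists>k\<in>K. w + k = 1"
    by (rule comaximal[OF tideal_orth_one_minus[OF I] K]) (use outside in blast)
  then show ?thesis unfolding orth_one_minus_def by blast
qed

text \<open>Taking
  w + k = 1 as above, e + f = 1 splits along the annihilator ideals lann_rad {w} and
  rann_rad (lann_rad {w}), which are comaximal.\<close>
lemma partition_lifts_to_rad_orth:
  fixes I K :: "'a::ring_1 set"
  assumes sep: "max_separated TYPE('a)" and I: "tideal I" and K: "tideal K"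
    and part: "\<And>P. maximal_ideal P \<Longrightarrow> I \<subseteq> P \<longleftrightarrow> \<not> K \<subseteq> P"
  shows "\<exists>e. rad_orth e (1 - e) \<and>
    (\<forall>P. maximal_ideal P \<longrightarrow> (I \<subseteq> P \<longrightarrow> 1 - e \<in> P) \<and> (K \<subseteq> P \<longrightarrow> e \<in> P))"
proof -
  obtain i k w where ikw: "i \<in> I" "k \<in> K" "w + k = 1" "rad_orth (1 - i) w"
    using partition_comaximal_witness[OF assms] by blast
  let ?A = "lann_rad {w}" and ?B = "rann_rad (lann_rad {w})"
  have iA: "1 - i \<in> ?A" and wB: "w \<in> ?B"
    using ikw(4) unfolding lann_rad_def rann_rad_def by auto
  text \<open>On V(I), 1 - i is a unit mod P; on V(K), w is.\<close>
  have unit_I: "1 - i \<notin> P" if "maximal_ideal P" "I \<subseteq> P" for P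
    using maximal_ideal_not_both[OF that(1), of "1 - i" i] ikw(1) that(2) by auto
  have unit_K: "w \<notin> P" if "maximal_ideal P" "K \<subseteq> P" for P
    using maximal_ideal_not_both[OF that(1), of w k] ikw(2,3) that(2) by auto
  have "\<exists>e\<in>?A. \<exists>f\<in>?B. e + f = 1"
  proof (rule comaximal[OF tideal_lann_rad tideal_rann_rad])
    fix P assume P: "maximal_ideal P" "?A \<subseteq> P" "?B \<subseteq> P"
    then show False using part[OF P(1)] unit_I unit_K iA wB by blast
  qed
  then obtain e where e: "e \<in> ?A" "1 - e \<in> ?B" by (auto simp: sum_eq_one_iff)
  have orth: "rad_orth e (1 - e)" using e by (simp add: rann_rad_def)
  have iorth: "rad_orth (1 - i) (1 - e)" using e(2) iA by (simp add: rann_rad_def)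
  have worth: "rad_orth e w" using e(1) by (simp add: lann_rad_def)
  have "\<forall>P. maximal_ideal P \<longrightarrow> (I \<subseteq> P \<longrightarrow> 1 - e \<in> P) \<and> (K \<subseteq> P \<longrightarrow> e \<in> P)"
    using rad_orth_maximal[OF iorth] rad_orth_maximal[OF worth] unit_I unit_K by blast
  then show ?thesis using orth by (intro exI[of _ e] conjI)
qed

subsection \<open>Conditions (1) and (2) imply feckly clean\<close>

lemma Max_strongly_zero_dimE:
  fixes A B :: "'a::ring_1 set set"
  assumes "Max_strongly_zero_dim TYPE('a)" "closedMax A" "closedMax B" "A \<inter> B = {}"
  obtains C1 C2 where "clopenMax C1" "clopenMax C2" "C1 \<inter> C2 = {}" "A \<subseteq> C1" "B \<subseteq> C2"
  using assms unfolding Max_strongly_zero_dim_def by blast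

text \<open>Separate V(a) from V(1-a) by a clopen C = V(I) with complement V(K), lift the partition
  to e, and check that u = a - e lies in no maximal ideal.\<close>
lemma strongly_zero_dim_separated_imp_feckly_clean_elem:
  fixes a :: "'a::ring_1"
  assumes szd: "Max_strongly_zero_dim TYPE('a)" and sep: "max_separated TYPE('a)"
  shows "feckly_clean_elem a"
proof -
  have "\<not> (a \<in> M \<and> 1 - a \<in> M)" if "maximal_ideal M" for M
    using maximal_ideal_not_both[OF that, of a "1 - a"] by auto
  then have disj: "{M \<in> MaxR. a \<in> M} \<inter> {M \<in> MaxR. 1 - a \<in> M} = {}"
    unfolding MaxR_def by blast
  obtain C1 C2 where C: "clopenMax C1" "clopenMax C2" "C1 \<inter> C2 = {}"
    "{M \<in> MaxR. a \<in> M} \<subseteq> C1" "{M \<in> MaxR. 1 - a \<in> M} \<subseteq> C2"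
    by (rule Max_strongly_zero_dimE[OF szd closedMax_zero_set closedMax_zero_set disj])
  obtain I K where I: "tideal I" "C1 = VMax I" and K: "tideal K" "MaxR - C1 = VMax K"
    using C(1) unfolding clopenMax_def closedMax_def by blast
  have inC1: "M \<in> C1 \<longleftrightarrow> I \<subseteq> M" "M \<notin> C1 \<longleftrightarrow> K \<subseteq> M" if "maximal_ideal M" for M
    using that I(2) K(2) unfolding VMax_def MaxR_def by blast+
  have part: "I \<subseteq> P \<longleftrightarrow> \<not> K \<subseteq> P" if "maximal_ideal P" for P
    using inC1[OF that] by blast
  obtain e where e: "rad_orth e (1 - e)"
    "\<And>P. maximal_ideal P \<Longrightarrow> I \<subseteq> P \<Longrightarrow> 1 - e \<in> P" "\<And>P. maximal_ideal P \<Longrightarrow> K \<subseteq> P \<Longrightarrow> e \<in> P"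
    using partition_lifts_to_rad_orth[OF sep I(1) K(1) part] by blast
  have "full (a - e)" unfolding full_iff_not_in_maximal
  proof (intro allI impI notI)
    fix M assume M: "maximal_ideal M" and u: "a - e \<in> M"
    have tM: "tideal M" using M maximal_idealD by blast
    show False
    proof (cases "M \<in> C1")
      case True
      then have "(1 - e) - (a - e) \<in> M" using e(2) inC1 M u tideal_diff[OF tM] by blast
      then have "1 - a \<in> M" by simp
      then show False using True C(3,5) M unfolding MaxR_def by blast
    next
      case False
      then have "(a - e) + e \<in> M" using e(3) inC1 M u tideal_add[OF tM] by blast
      then show False using False C(4) M unfolding MaxR_def by auto
    qed
  qed
  moreover have "a = e + (a - e)" by simp
  ultimately show ?thesis using e(1) unfolding feckly_clean_elem_def rad_orth_def by blast
qed

theorem corollary3p6: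
  shows "feckly_clean TYPE('a::ring_1) \<longleftrightarrow>
    (Max_strongly_zero_dim TYPE('a) \<and>
     (\<forall>M N :: 'a set. maximal_ideal M \<and> maximal_ideal N \<and> M \<noteq> N \<longrightarrow>
        (\<exists>a b. a \<notin> M \<and> b \<notin> N \<and> (\<forall>r. a * r * b \<in> (jacobson :: 'a set)))))"
proof -
  have "max_separated TYPE('a) \<longleftrightarrow>
     (\<forall>M N :: 'a set. maximal_ideal M \<and> maximal_ideal N \<and> M \<noteq> N \<longrightarrow>
        (\<exists>a b. a \<notin> M \<and> b \<notin> N \<and> (\<forall>r. a * r * b \<in> (jacobson :: 'a set))))"
    unfolding max_separated_def rad_orth_def ..
  moreover have "feckly_clean TYPE('a) \<Longrightarrow> max_separated TYPE('a)"
    unfolding max_separated_def using feckly_clean_imp_separation by blast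
  moreover have "feckly_clean TYPE('a)"
    if "Max_strongly_zero_dim TYPE('a)" "max_separated TYPE('a)"
    unfolding feckly_clean_def
    using strongly_zero_dim_separated_imp_feckly_clean_elem[OF that] by blast
  ultimately show ?thesis using feckly_clean_imp_strongly_zero_dim by blast
qed

end
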